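(* Let $n\ge p\ge1$, $0<\varepsilon<1$, $\lambda>0$. Let $X\in\mathbb{R}^{n\times p}$ with $\|X^\top X-I_p\|\le\varepsilon$, let $A\in\mathbb{R}^{n\times n}$ be skew-symmetric, let $F(X,A)=AX+\lambda X(X^\top X-I_p)$, and for a step size $\eta>0$ set $\tilde X=X-\eta F(X,A)$. Let $g=\|F(X,A)\|$ and $d=\|X^\top X-I_p\|$. If $$\eta\le\eta(X):=\min\left\{\frac{\lambda d(1-d)+\sqrt{\lambda^2d^2(1-d)^2+g^2(\varepsilon-d)}}{g^2},\ \frac{1}{2\lambda}\right\},$$ (with the first term interpreted as $+\infty$ when $g=0$), then $\|\tilde X^\top\tilde X-I_p\|\le\varepsilon$.
   Context: $\|\cdot\|$ denotes the Frobenius norm. *)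

theory Defs
  imports "HOL-Analysis.Analysis"
begin

definition frob_norm :: "real^'n^'m \<Rightarrow> real" where
  "frob_norm M = sqrt (\<Sum>i\<in>UNIV. \<Sum>j\<in>UNIV. (M $ i $ j)^2)"

definition Ffield :: "real \<Rightarrow> real^'p^'n \<Rightarrow> real^'n^'n \<Rightarrow> real^'p^'n" where
  "Ffield lam X A = A ** X + lam *\<^sub>R (X ** (transpose X ** X - mat 1))"

definition eta_bound :: "real \<Rightarrow> real \<Rightarrow> real^'p^'n \<Rightarrow> real^'n^'n \<Rightarrow> real" where
  "eta_bound eps lam X A =
    (let g = frob_norm (Ffield lam X A); d = frob_norm (transpose X ** X - mat 1) in
     if g = 0 then 1 / (2 * lam)
     else min ((lam * d * (1 - d) + sqrt (lam^2 * d^2 * (1 - d)^2 + g^2 * (eps - d))) / g^2)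
              (1 / (2 * lam)))"

end

theory Submission
  imports Defs
begin

text \<open>
  Write \<open>S = X\<^sup>T X - I\<close> and \<open>F = F(X,A)\<close>. Since \<open>X\<^sup>T A X\<close> is skew-symmetric it cancels in
  \<open>X\<^sup>T F + F\<^sup>T X = 2\<lambda>(S\<^sup>2 + S)\<close>, so the new Gram defect is
  \<open>(1 - 2\<eta>\<lambda>) S - 2\<eta>\<lambda> S\<^sup>2 + \<eta>\<^sup>2 F\<^sup>T F\<close>. As the Frobenius norm is submultiplicative and
  \<open>1 - 2\<eta>\<lambda> \<ge> 0\<close>, its norm is at most \<open>d - 2\<eta>\<lambda>d(1 - d) + \<eta>\<^sup>2g\<^sup>2\<close>, and the first term of
  \<open>\<eta>(X)\<close> is the positive root of the quadratic \<open>g\<^sup>2\<eta>\<^sup>2 - 2\<lambda>d(1 - d)\<eta> = \<epsilon> - d\<close>.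
\<close>

lemma power2_norm_matrix: "(norm (M :: real^'n^'m))\<^sup>2 = (\<Sum>i\<in>UNIV. \<Sum>j\<in>UNIV. (M $ i $ j)\<^sup>2)"
  by (simp add: norm_vec_def L2_set_def sum_nonneg)

lemma frob_norm_eq_norm: "frob_norm M = norm M"
  by (simp add: frob_norm_def flip: power2_norm_matrix)

lemma norm_transpose: "norm (transpose (M :: real^'n^'m)) = norm M"
proof -
  have "(norm (transpose M))\<^sup>2 = (norm M)\<^sup>2"
    unfolding power2_norm_matrix transpose_def by (simp add: sum.swap[of "\<lambda>i j. (M $ j $ i)\<^sup>2"])
  then show ?thesis by (simp add: power2_eq_iff_nonneg)
qed

lemma norm_matrix_mult_le: "norm ((A :: real^'n^'m) ** B) \<le> norm A * norm B"
proof -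
  have "(norm (A ** B))\<^sup>2 = (\<Sum>i\<in>UNIV. \<Sum>k\<in>UNIV. (\<Sum>j\<in>UNIV. A$i$j * B$j$k)\<^sup>2)"
    by (simp add: power2_norm_matrix matrix_matrix_mult_def)
  also have "\<dots> \<le> (\<Sum>i\<in>UNIV. \<Sum>k\<in>UNIV. (\<Sum>j\<in>UNIV. (A$i$j)\<^sup>2) * (\<Sum>j\<in>UNIV. (B$j$k)\<^sup>2))"
    by (intro sum_mono Cauchy_Schwarz_ineq_sum)
  also have "\<dots> = (\<Sum>i\<in>UNIV. \<Sum>j\<in>UNIV. (A$i$j)\<^sup>2) * (\<Sum>k\<in>UNIV. \<Sum>j\<in>UNIV. (B$j$k)\<^sup>2)"
    by (rule sum_product[symmetric])
  also have "\<dots> = (norm A * norm B)\<^sup>2"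
    by (simp add: power_mult_distrib power2_norm_matrix sum.swap[of "\<lambda>k j. (B$j$k)\<^sup>2"])
  finally show ?thesis
    by (simp add: power2_le_iff_abs_le)
qed

lemma matrix_add_rdistrib: "((A :: 'a::semiring_1^'n^'m) + B) ** C = A ** C + B ** C"
  by (vector matrix_matrix_mult_def sum.distrib[symmetric] field_simps)

lemma matrix_diff_ldistrib: "(A :: 'a::ring_1^'n^'m) ** (B - C) = A ** B - A ** C"
  by (vector matrix_matrix_mult_def sum_subtractf[symmetric] field_simps)

lemma matrix_diff_rdistrib: "((A :: 'a::ring_1^'n^'m) - B) ** C = A ** C - B ** C"
  by (vector matrix_matrix_mult_def sum_subtractf[symmetric] field_simps)

lemma matrix_uminus_right: "(A :: 'a::ring_1^'n^'m) ** (- B) = - (A ** B)"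
  by (vector matrix_matrix_mult_def sum_negf[symmetric])

lemma transpose_add: "transpose (A + B) = transpose A + transpose B"
  by (vector transpose_def)

lemma transpose_diff: "transpose (A - B) = transpose A - transpose B"
  by (vector transpose_def)

lemma gram_diff_scaleR:
  fixes X F :: "real^'p^'n"
  shows "transpose (X - t *\<^sub>R F) ** (X - t *\<^sub>R F)
    = transpose X ** X - t *\<^sub>R (transpose X ** F + transpose F ** X) + t\<^sup>2 *\<^sub>R (transpose F ** F)"
  by (simp add: transpose_diff transpose_scalar matrix_diff_ldistrib matrix_diff_rdistrib
      matrix_scalar_ac scalar_matrix_assoc power2_eq_square algebra_simps)

lemma Ffield_gram_symmetric_part:
  fixes X :: "real^'p^'n" and A :: "real^'n^'n"
  assumes "transpose A = - A"
  defines "S \<equiv> transpose X ** X - mat 1"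
  shows "transpose X ** Ffield lam X A + transpose (Ffield lam X A) ** X = (2 * lam) *\<^sub>R (S ** S + S)"
proof -
  have F_eq: "Ffield lam X A = A ** X + lam *\<^sub>R (X ** S)"
    by (simp add: Ffield_def S_def)
  have S_sym: "transpose S = S"
    by (simp add: S_def transpose_diff matrix_transpose_mul)
  have gram: "transpose X ** X = S + mat 1"
    by (simp add: S_def)
  have "transpose X ** Ffield lam X A = (transpose X ** A) ** X + lam *\<^sub>R (S ** S + S)"
    by (simp add: F_eq matrix_add_ldistrib matrix_scalar_ac matrix_mul_assoc gram matrix_add_rdistrib
        flip: scalar_matrix_assoc)
  moreover have "transpose (Ffield lam X A) ** X = - ((transpose X ** A) ** X) + lam *\<^sub>R (S ** S + S)"
    by (simp add: F_eq assms(1) S_sym transpose_add transpose_scalar matrix_transpose_mul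
        matrix_uminus_right matrix_diff_rdistrib gram matrix_add_ldistrib
        flip: matrix_mul_assoc scalar_matrix_assoc)
  ultimately show ?thesis
    by (simp only: mult_2 scaleR_add_left) (simp add: algebra_simps del: scaleR_add_right)
qed

lemma gram_defect_Ffield_step:
  fixes X :: "real^'p^'n" and A :: "real^'n^'n" and lam t :: real
  assumes "transpose A = - A"
  defines "S \<equiv> transpose X ** X - mat 1" and "F \<equiv> Ffield lam X A"
  shows "transpose (X - t *\<^sub>R F) ** (X - t *\<^sub>R F) - mat 1
    = (1 - 2 * t * lam) *\<^sub>R S - (2 * t * lam) *\<^sub>R (S ** S) + t\<^sup>2 *\<^sub>R (transpose F ** F)"
proof -
  have "transpose (X - t *\<^sub>R F) ** (X - t *\<^sub>R F) - mat 1
      = S - t *\<^sub>R ((2 * lam) *\<^sub>R (S ** S + S)) + t\<^sup>2 *\<^sub>R (transpose F ** F)"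
    unfolding gram_diff_scaleR F_def Ffield_gram_symmetric_part[OF assms(1)]
    by (simp add: S_def algebra_simps)
  then show ?thesis
    by (simp add: algebra_simps)
qed

lemma norm_gram_step_le:
  fixes S :: "real^'p^'p" and F :: "real^'p^'n"
  assumes "0 \<le> c" and "c \<le> 1"
  shows "norm ((1 - c) *\<^sub>R S - c *\<^sub>R (S ** S) + t\<^sup>2 *\<^sub>R (transpose F ** F))
    \<le> (1 - c) * norm S + c * (norm S)\<^sup>2 + t\<^sup>2 * (norm F)\<^sup>2"
proof -
  have "norm ((1 - c) *\<^sub>R S - c *\<^sub>R (S ** S) + t\<^sup>2 *\<^sub>R (transpose F ** F))
      \<le> norm ((1 - c) *\<^sub>R S) + norm (c *\<^sub>R (S ** S)) + norm (t\<^sup>2 *\<^sub>R (transpose F ** F))"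
    by (meson add_mono norm_triangle_ineq norm_triangle_ineq4 order_trans order_refl)
  also have "\<dots> = (1 - c) * norm S + c * norm (S ** S) + t\<^sup>2 * norm (transpose F ** F)"
    using assms by simp
  also have "\<dots> \<le> (1 - c) * norm S + c * (norm S)\<^sup>2 + t\<^sup>2 * (norm F)\<^sup>2"
    using norm_matrix_mult_le[of S S] norm_matrix_mult_le[of "transpose F" F] assms
    by (intro add_mono mult_left_mono) (simp_all add: norm_transpose power2_eq_square)
  finally show ?thesis .
qed

lemma quadratic_le_below_pos_root:
  fixes a b c t :: real
  assumes "0 < a" and "0 \<le> b" and "0 \<le> c" and "0 \<le> t"
    and "t \<le> (b + sqrt (b\<^sup>2 + a * c)) / a"
  shows "a * t\<^sup>2 - 2 * b * t \<le> c"
proof (cases "a * t \<le> b")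
  case True
  then have "a * t\<^sup>2 \<le> b * t"
    using mult_right_mono[OF True assms(4)] by (simp add: power2_eq_square mult.assoc)
  moreover have "0 \<le> b * t"
    using assms(2,4) by simp
  ultimately show ?thesis
    using assms(3) by linarith
next
  case False
  have "a * t - b \<le> sqrt (b\<^sup>2 + a * c)"
    using assms(1,5) by (simp add: pos_le_divide_eq mult.commute)
  then have "(a * t - b)\<^sup>2 \<le> (sqrt (b\<^sup>2 + a * c))\<^sup>2"
    using False by (intro power_mono) auto
  also have "\<dots> = b\<^sup>2 + a * c"
    using assms(1,3) by simp
  finally have "(a * t - b)\<^sup>2 \<le> b\<^sup>2 + a * c" .
  then have "a * (a * t\<^sup>2 - 2 * b * t) \<le> a * c"
    by (simp add: power2_eq_square algebra_simps)
  then show ?thesis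
    using assms(1) by simp
qed

lemma gram_defect_estimate_le:
  fixes d g eps lam eta :: real
  assumes "0 \<le> d" and "d \<le> eps" and "eps < 1" and "0 < lam" and "0 < eta"
    and "g \<noteq> 0 \<Longrightarrow>
      eta \<le> (lam * d * (1 - d) + sqrt (lam\<^sup>2 * d\<^sup>2 * (1 - d)\<^sup>2 + g\<^sup>2 * (eps - d))) / g\<^sup>2"
  shows "(1 - 2 * eta * lam) * d + 2 * eta * lam * d\<^sup>2 + eta\<^sup>2 * g\<^sup>2 \<le> eps"
proof -
  have "g\<^sup>2 * eta\<^sup>2 - 2 * (lam * d * (1 - d)) * eta \<le> eps - d"
  proof (cases "g = 0")
    case True
    have "0 \<le> lam * d * (1 - d) * eta"
      using assms(1-5) by simp
    with True assms(2) show ?thesis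
      by simp
  next
    case False
    then show ?thesis
      using quadratic_le_below_pos_root[of "g\<^sup>2" "lam * d * (1 - d)" "eps - d" eta] assms
      by (simp add: power_mult_distrib)
  qed
  then show ?thesis
    by (simp add: power2_eq_square algebra_simps)
qed

theorem lemma3:
  fixes X :: "real^'p^'n" and A :: "real^'n^'n" and eps lam eta :: real
  assumes "CARD('p) \<le> CARD('n)"
    and "0 < eps" and "eps < 1" and "0 < lam"
    and "frob_norm (transpose X ** X - mat 1) \<le> eps"
    and "transpose A = - A"
    and "0 < eta" and "eta \<le> eta_bound eps lam X A"
  shows "frob_norm (transpose (X - eta *\<^sub>R Ffield lam X A) ** (X - eta *\<^sub>R Ffield lam X A) - mat 1) \<le> eps"
proof -
  define S where "S = transpose X ** X - mat 1"
  define F where "F = Ffield lam X A"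
  have eta_half: "eta \<le> 1 / (2 * lam)"
    and eta_root: "norm F \<noteq> 0 \<Longrightarrow> eta \<le> (lam * norm S * (1 - norm S)
      + sqrt (lam\<^sup>2 * (norm S)\<^sup>2 * (1 - norm S)\<^sup>2 + (norm F)\<^sup>2 * (eps - norm S))) / (norm F)\<^sup>2"
    using assms(8) by (auto simp: eta_bound_def Let_def frob_norm_eq_norm S_def F_def split: if_splits)
  have step_weight: "0 \<le> 2 * eta * lam" "2 * eta * lam \<le> 1"
    using eta_half assms(4,7) by (simp_all add: field_simps)
  have "frob_norm (transpose (X - eta *\<^sub>R F) ** (X - eta *\<^sub>R F) - mat 1)
      = norm ((1 - 2 * eta * lam) *\<^sub>R S - (2 * eta * lam) *\<^sub>R (S ** S) + eta\<^sup>2 *\<^sub>R (transpose F ** F))"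
    by (simp add: frob_norm_eq_norm gram_defect_Ffield_step[OF assms(6)] S_def F_def)
  also have "\<dots> \<le> (1 - 2 * eta * lam) * norm S + 2 * eta * lam * (norm S)\<^sup>2 + eta\<^sup>2 * (norm F)\<^sup>2"
    using norm_gram_step_le[OF step_weight] .
  also have "\<dots> \<le> eps"
    using assms(3-5,7) eta_root
    by (intro gram_defect_estimate_le) (simp_all add: S_def frob_norm_eq_norm)
  finally show ?thesis
    by (simp add: F_def)
qed

end
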